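(* For every $\theta\in V_\Lambda$, the classes $\mathcal P(\theta)$ and $\overline{\mathcal P}(\theta)$ are pseudo-torsion classes in $\mathcal G$. Moreover, each of them is closed under arbitrary extensions in $\mathrm{mod}\text-\Lambda$ (if $0\to A\to B\to C\to 0$ is exact with $A,C$ in the class then $B$ is in the class); in particular they are closed under direct sums.
   Context: Let $\Lambda$ be a finite dimensional algebra over a field with $n$ isoclasses of simple modules, and $\mathrm{mod}\text-\Lambda$ the category of finitely generated right $\Lambda$-modules. Fix a torsion class $\mathcal G\subseteq\mathrm{mod}\text-\Lambda$ (closed under isomorphisms, extensions and quotients). For $B\in\mathcal G$, a subobject of $B$ is a submodule in $\mathcal G$; a subobject $A\subseteq B$ is strict if $A\cap B'\in\mathcal G$ for every subobject $B'$ of $B$; a strict quotient of $B$ is $B/A$ with $A$ a strict subobject. A short exact sequence $0\to A\to B\to C\to 0$ in $\mathcal G$ is strict exact if $A$ is a strict subobject of $B$. A pseudo-torsion class is a nonempty class $\mathcal P\subseteq\mathcal G$ closed under strict quotients and strict extensions. Let $K_0\Lambda\cong\mathbb Z^n$ and $V_\Lambda=\mathrm{Hom}_{\mathbb Z}(K_0\Lambda,\mathbb R)\cong\mathbb R^n$; for $\theta\in V_\Lambda$ and a module $M$, $\theta(M)$ denotes $\theta$ applied to the dimension vector (composition-factor multiplicities) of $M$. Define $\mathcal P(\theta)$ as the class consisting of $0$ and all nonzero $M\in\mathcal G$ with $\theta(M'')>0$ for every nonzero strict quotient $M''$ of $M$ (including $M''=M$); and $\overline{\mathcal P}(\theta)$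 as the class of $M\in\mathcal G$ with $\theta(M'')\ge 0$ for every strict quotient $M''$ of $M$. *)

theory Defs
  imports Complex_Main "HOL-Algebra.Module"
begin

definition fd_algebra :: "'k ring \<Rightarrow> 'a ring \<Rightarrow> ('k \<Rightarrow> 'a) \<Rightarrow> bool" where
  "fd_algebra K R phi \<longleftrightarrow> field K \<and> ring R \<and> phi \<in> ring_hom K R \<and>
     (\<forall>c\<in>carrier K. \<forall>r\<in>carrier R. phi c \<otimes>\<^bsub>R\<^esub> r = r \<otimes>\<^bsub>R\<^esub> phi c) \<and>
     (\<exists>B. finite B \<and> B \<subseteq> carrier R \<and>
        (\<forall>r\<in>carrier R. \<exists>c\<in>B \<rightarrow> carrier K.
            r = (\<Oplus>\<^bsub>R\<^esub> b\<in>B. phi (c b) \<otimes>\<^bsub>R\<^esub> b)))"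

(* A right R-module is represented by a HOL-Algebra module record M, where
  the term smult M r m (written r .M m) stands for the right action m.r. *)
definition right_module :: "'a ring \<Rightarrow> ('a, 'b) module \<Rightarrow> bool" where
  "right_module R M \<longleftrightarrow> ring R \<and> abelian_group M \<and>
     (\<forall>r\<in>carrier R. \<forall>m\<in>carrier M. r \<odot>\<^bsub>M\<^esub> m \<in> carrier M) \<and>
     (\<forall>m\<in>carrier M. \<one>\<^bsub>R\<^esub> \<odot>\<^bsub>M\<^esub> m = m) \<and>
     (\<forall>r\<in>carrier R. \<forall>s\<in>carrier R. \<forall>m\<in>carrier M.
         (r \<oplus>\<^bsub>R\<^esub> s) \<odot>\<^bsub>M\<^esub> m = (r \<odot>\<^bsub>M\<^esub> m) \<oplus>\<^bsub>M\<^esub> (s \<odot>\<^bsub>M\<^esub> m)) \<and>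
     (\<forall>r\<in>carrier R. \<forall>m\<in>carrier M. \<forall>n\<in>carrier M.
         r \<odot>\<^bsub>M\<^esub> (m \<oplus>\<^bsub>M\<^esub> n) = (r \<odot>\<^bsub>M\<^esub> m) \<oplus>\<^bsub>M\<^esub> (r \<odot>\<^bsub>M\<^esub> n)) \<and>
     (\<forall>r\<in>carrier R. \<forall>s\<in>carrier R. \<forall>m\<in>carrier M.
         (r \<otimes>\<^bsub>R\<^esub> s) \<odot>\<^bsub>M\<^esub> m = s \<odot>\<^bsub>M\<^esub> (r \<odot>\<^bsub>M\<^esub> m))"

definition fin_gen :: "'a ring \<Rightarrow> ('a, 'b) module \<Rightarrow> bool" where
  "fin_gen R M \<longleftrightarrow> (\<exists>S. finite S \<and> S \<subseteq> carrier M \<and>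
     (\<forall>m\<in>carrier M. \<exists>f\<in>S \<rightarrow> carrier R. m = (\<Oplus>\<^bsub>M\<^esub> s\<in>S. f s \<odot>\<^bsub>M\<^esub> s)))"

definition modL :: "'a ring \<Rightarrow> ('a, 'b) module \<Rightarrow> bool" where
  "modL R M \<longleftrightarrow> right_module R M \<and> fin_gen R M"

definition is_zero_mod :: "('a, 'b) module \<Rightarrow> bool" where
  "is_zero_mod M \<longleftrightarrow> carrier M = {\<zero>\<^bsub>M\<^esub>}"

definition rsubmod :: "'a ring \<Rightarrow> ('a, 'b) module \<Rightarrow> 'b set \<Rightarrow> bool" where
  "rsubmod R M N \<longleftrightarrow> N \<subseteq> carrier M \<and> \<zero>\<^bsub>M\<^esub> \<in> N \<and>
     (\<forall>x\<in>N. \<forall>y\<in>N. x \<oplus>\<^bsub>M\<^esub> y \<in> N) \<and> (\<forall>x\<in>N. \<ominus>\<^bsub>M\<^esub> x \<in> N) \<and>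
     (\<forall>r\<in>carrier R. \<forall>x\<in>N. r \<odot>\<^bsub>M\<^esub> x \<in> N)"

definition subm :: "('a, 'b) module \<Rightarrow> 'b set \<Rightarrow> ('a, 'b) module" where
  "subm M N = M\<lparr>carrier := N\<rparr>"

definition rhom :: "'a ring \<Rightarrow> ('a, 'b) module \<Rightarrow> ('a, 'b) module \<Rightarrow> ('b \<Rightarrow> 'b) \<Rightarrow> bool" where
  "rhom R M N f \<longleftrightarrow> f \<in> carrier M \<rightarrow> carrier N \<and>
     (\<forall>x\<in>carrier M. \<forall>y\<in>carrier M. f (x \<oplus>\<^bsub>M\<^esub> y) = f x \<oplus>\<^bsub>N\<^esub> f y) \<and>
     (\<forall>r\<in>carrier R. \<forall>x\<in>carrier M. f (r \<odot>\<^bsub>M\<^esub> x) = r \<odot>\<^bsub>N\<^esub> f x)"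

definition kern :: "('a, 'b) module \<Rightarrow> ('a, 'b) module \<Rightarrow> ('b \<Rightarrow> 'b) \<Rightarrow> 'b set" where
  "kern M N f = {x \<in> carrier M. f x = \<zero>\<^bsub>N\<^esub>}"

definition ses :: "'a ring \<Rightarrow> ('a, 'b) module \<Rightarrow> ('a, 'b) module \<Rightarrow> ('a, 'b) module
                    \<Rightarrow> ('b \<Rightarrow> 'b) \<Rightarrow> ('b \<Rightarrow> 'b) \<Rightarrow> bool" where
  "ses R A B C f g \<longleftrightarrow> modL R A \<and> modL R B \<and> modL R C \<and>
     rhom R A B f \<and> inj_on f (carrier A) \<and>
     rhom R B C g \<and> g ` carrier B = carrier C \<and>
     f ` carrier A = kern B C g"

definition quot_map :: "'a ring \<Rightarrow> ('a, 'b) module \<Rightarrow> ('a, 'b) module \<Rightarrow> ('b \<Rightarrow> 'b) \<Rightarrow> bool" where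
  "quot_map R B C g \<longleftrightarrow> modL R B \<and> modL R C \<and> rhom R B C g \<and> g ` carrier B = carrier C"

type_synonym ('a, 'b) modclass = "('a, 'b) module \<Rightarrow> bool"

definition ext_closed :: "'a ring \<Rightarrow> ('a, 'b) modclass \<Rightarrow> bool" where
  "ext_closed R P \<longleftrightarrow> (\<forall>A B C f g. ses R A B C f g \<and> P A \<and> P C \<longrightarrow> P B)"

definition torsion_class :: "'a ring \<Rightarrow> ('a, 'b) modclass \<Rightarrow> bool" where
  "torsion_class R G \<longleftrightarrow>
     (\<forall>M. G M \<longrightarrow> modL R M) \<and>
     (\<forall>M. modL R M \<and> is_zero_mod M \<longrightarrow> G M) \<and>
     (\<forall>B C g. quot_map R B C g \<and> inj_on g (carrier B) \<and> G B \<longrightarrow> G C) \<and>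
     ext_closed R G \<and>
     (\<forall>B C g. quot_map R B C g \<and> G B \<longrightarrow> G C)"

definition subobj :: "'a ring \<Rightarrow> ('a, 'b) modclass \<Rightarrow> ('a, 'b) module \<Rightarrow> 'b set \<Rightarrow> bool" where
  "subobj R G B N \<longleftrightarrow> rsubmod R B N \<and> G (subm B N)"

definition strict_subobj :: "'a ring \<Rightarrow> ('a, 'b) modclass \<Rightarrow> ('a, 'b) module \<Rightarrow> 'b set \<Rightarrow> bool" where
  "strict_subobj R G B A \<longleftrightarrow> subobj R G B A \<and>
     (\<forall>B'. subobj R G B B' \<longrightarrow> G (subm B (A \<inter> B')))"

definition strict_quot :: "'a ring \<Rightarrow> ('a, 'b) modclass \<Rightarrow> ('a, 'b) module \<Rightarrow> ('a, 'b) module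
                            \<Rightarrow> ('b \<Rightarrow> 'b) \<Rightarrow> bool" where
  "strict_quot R G B C g \<longleftrightarrow> G B \<and> quot_map R B C g \<and> strict_subobj R G B (kern B C g)"

definition strict_ses :: "'a ring \<Rightarrow> ('a, 'b) modclass \<Rightarrow> ('a, 'b) module \<Rightarrow> ('a, 'b) module
                    \<Rightarrow> ('a, 'b) module \<Rightarrow> ('b \<Rightarrow> 'b) \<Rightarrow> ('b \<Rightarrow> 'b) \<Rightarrow> bool" where
  "strict_ses R G A B C f g \<longleftrightarrow> ses R A B C f g \<and> G A \<and> G B \<and> G C \<and>
     strict_subobj R G B (f ` carrier A)"

definition pseudo_torsion_class :: "'a ring \<Rightarrow> ('a, 'b) modclass \<Rightarrow> ('a, 'b) modclass \<Rightarrow> bool" where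
  "pseudo_torsion_class R G P \<longleftrightarrow>
     (\<exists>M. P M) \<and> (\<forall>M. P M \<longrightarrow> G M) \<and>
     (\<forall>B C g. P B \<and> strict_quot R G B C g \<longrightarrow> P C) \<and>
     (\<forall>A B C f g. strict_ses R G A B C f g \<and> P A \<and> P C \<longrightarrow> P B)"

(* An element theta of V_Lambda = Hom(K_0(mod Lambda), real) is the same as a real valued
  function on mod-Lambda that is additive on short exact sequences (universal property
  of the Grothendieck group); theta M is theta applied to the class [M] = dim vector of M. *)
definition additive_fun :: "'a ring \<Rightarrow> (('a, 'b) module \<Rightarrow> real) \<Rightarrow> bool" where
  "additive_fun R \<theta> \<longleftrightarrow> (\<forall>A B C f g. ses R A B C f g \<longrightarrow> \<theta> B = \<theta> A + \<theta> C)"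

definition Pth :: "'a ring \<Rightarrow> ('a, 'b) modclass \<Rightarrow> (('a, 'b) module \<Rightarrow> real) \<Rightarrow> ('a, 'b) modclass" where
  "Pth R G \<theta> M \<longleftrightarrow> G M \<and>
     (is_zero_mod M \<or> (\<forall>C g. strict_quot R G M C g \<and> \<not> is_zero_mod C \<longrightarrow> \<theta> C > 0))"

definition Pbar :: "'a ring \<Rightarrow> ('a, 'b) modclass \<Rightarrow> (('a, 'b) module \<Rightarrow> real) \<Rightarrow> ('a, 'b) modclass" where
  "Pbar R G \<theta> M \<longleftrightarrow> G M \<and> (\<forall>C g. strict_quot R G M C g \<longrightarrow> \<theta> C \<ge> 0)"

definition dsum_closed :: "'a ring \<Rightarrow> ('a, 'b) modclass \<Rightarrow> bool" where
  "dsum_closed R P \<longleftrightarrow> (\<forall>B A C. modL R B \<and> rsubmod R B A \<and> rsubmod R B C \<and>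
      A \<inter> C = {\<zero>\<^bsub>B\<^esub>} \<and> (\<forall>x\<in>carrier B. \<exists>a\<in>A. \<exists>c\<in>C. x = a \<oplus>\<^bsub>B\<^esub> c) \<and>
      P (subm B A) \<and> P (subm B C) \<longrightarrow> P B)"

end

theory Submission
  imports Defs
begin

(*
  For a class \<Phi> of modules that contains 0 and is closed under extensions, consider the class
  of modules in G all of whose strict quotients satisfy \<Phi>.  P(\<theta>) and P-bar(\<theta>) are of this form,
  for \<Phi> = "C = 0 or \<theta>(C) > 0" and \<Phi> = "\<theta>(C) \<ge> 0", both extension closed by additivity of \<theta>.
  A strict quotient of a strict quotient is strict, which gives closure under strict quotients.
  For an extension A \<rightarrow> B \<rightarrow> C and a strict quotient h : B \<rightarrow> D, the image h(A) is a strict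
  quotient of A and D / h(A) is a strict quotient of C; since \<Phi> is extension closed, \<Phi> holds
  for D.  A direct sum B = A \<oplus> C is an extension of B / A \<cong> C by A.
*)

lemma (in abelian_group) diff_zero: "x \<in> carrier G \<Longrightarrow> x \<ominus> \<zero> = x"
  using minus_equality[of \<zero> \<zero>] by (simp add: minus_eq)

lemma (in abelian_group) diff_eq_zero_iff: "x \<in> carrier G \<Longrightarrow> y \<in> carrier G \<Longrightarrow> x \<ominus> y = \<zero> \<longleftrightarrow> x = y"
  by (simp add: add.inv_solve_right' minus_eq)

lemma (in abelian_group) minus_diff_eq: "a \<in> carrier G \<Longrightarrow> b \<in> carrier G \<Longrightarrow> \<ominus> (a \<ominus> b) = b \<ominus> a"
  by (simp add: add.inv_mult_group minus_eq)

lemma (in abelian_group) diff_add_diff: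
  "a \<in> carrier G \<Longrightarrow> b \<in> carrier G \<Longrightarrow> c \<in> carrier G \<Longrightarrow> (a \<ominus> b) \<oplus> (b \<ominus> c) = a \<ominus> c"
  by (simp add: a_assoc add.inv_solve_left' minus_eq)

lemma (in abelian_group) add_diff_cancel_right:
  "a \<in> carrier G \<Longrightarrow> b \<in> carrier G \<Longrightarrow> c \<in> carrier G \<Longrightarrow> (a \<oplus> c) \<ominus> (b \<oplus> c) = a \<ominus> b"
  by (simp add: minus_eq minus_add a_assoc a_lcomm[of c] r_neg)

lemma subm_simps [simp]:
  "carrier (subm M N) = N" "zero (subm M N) = \<zero>\<^bsub>M\<^esub>" "add (subm M N) = add M"
  "smult (subm M N) = smult M" "subm (subm M N) N' = subm M N'" "subm M (carrier M) = M"
  by (simp_all add: subm_def)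

section \<open>Right modules\<close>

locale rmodule =
  fixes R :: "'a ring" and M :: "('a, 'b) module" (structure)
  assumes is_right_module: "right_module R M"
begin

sublocale R: ring R
  using is_right_module by (simp add: right_module_def)

sublocale M: abelian_group M
  using is_right_module by (simp add: right_module_def)

lemma smult_closed [intro, simp]: "r \<in> carrier R \<Longrightarrow> m \<in> carrier M \<Longrightarrow> r \<odot> m \<in> carrier M"
  using is_right_module by (simp add: right_module_def)

lemma smult_one [simp]: "m \<in> carrier M \<Longrightarrow> \<one>\<^bsub>R\<^esub> \<odot> m = m"
  using is_right_module by (simp add: right_module_def)

lemma smult_l_distr:
  "r \<in> carrier R \<Longrightarrow> s \<in> carrier R \<Longrightarrow> m \<in> carrier M \<Longrightarrow> (r \<oplus>\<^bsub>R\<^esub> s) \<odot> m = r \<odot> m \<oplus> s \<odot> m"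
  using is_right_module by (simp add: right_module_def)

lemma smult_r_distr:
  "r \<in> carrier R \<Longrightarrow> m \<in> carrier M \<Longrightarrow> n \<in> carrier M \<Longrightarrow> r \<odot> (m \<oplus> n) = r \<odot> m \<oplus> r \<odot> n"
  using is_right_module by (simp add: right_module_def)

lemma smult_assoc:
  "r \<in> carrier R \<Longrightarrow> s \<in> carrier R \<Longrightarrow> m \<in> carrier M \<Longrightarrow> (r \<otimes>\<^bsub>R\<^esub> s) \<odot> m = s \<odot> (r \<odot> m)"
  using is_right_module by (simp add: right_module_def)

lemma smult_zero_left [simp]: "m \<in> carrier M \<Longrightarrow> \<zero>\<^bsub>R\<^esub> \<odot> m = \<zero>"
  using smult_l_distr[of "\<zero>\<^bsub>R\<^esub>" "\<zero>\<^bsub>R\<^esub>" m] by simp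

lemma smult_zero_right [simp]: "r \<in> carrier R \<Longrightarrow> r \<odot> \<zero> = \<zero>"
  using smult_r_distr[of r \<zero> \<zero>] by simp

lemma smult_minus_right: "r \<in> carrier R \<Longrightarrow> m \<in> carrier M \<Longrightarrow> r \<odot> (\<ominus> m) = \<ominus> (r \<odot> m)"
  by (rule M.minus_equality[symmetric]) (simp_all add: smult_r_distr[symmetric] M.l_neg)

lemma smult_diff_right: "r \<in> carrier R \<Longrightarrow> m \<in> carrier M \<Longrightarrow> n \<in> carrier M \<Longrightarrow>
    r \<odot> (m \<ominus> n) = r \<odot> m \<ominus> r \<odot> n"
  by (simp add: M.minus_eq smult_r_distr smult_minus_right)

lemma rsubmod_subset: "rsubmod R M N \<Longrightarrow> N \<subseteq> carrier M"
  by (simp add: rsubmod_def)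

lemma rsubmod_diff: "rsubmod R M N \<Longrightarrow> x \<in> N \<Longrightarrow> y \<in> N \<Longrightarrow> x \<ominus> y \<in> N"
  by (simp add: rsubmod_def M.minus_eq)

lemma rsubmod_carrier: "rsubmod R M (carrier M)"
  by (auto simp: rsubmod_def)

lemma rsubmod_zero_set: "rsubmod R M {\<zero>}"
  by (auto simp: rsubmod_def)

lemma rsubmod_Int: "rsubmod R M N \<Longrightarrow> rsubmod R M N' \<Longrightarrow> rsubmod R M (N \<inter> N')"
  by (auto simp: rsubmod_def)

lemma right_module_subm:
  assumes N: "rsubmod R M N"
  shows "right_module R (subm M N)"
proof -
  have "abelian_group (subm M N)"
  proof (rule abelian_groupI)
    fix x assume "x \<in> carrier (subm M N)"
    then show "\<exists>y\<in>carrier (subm M N). y \<oplus>\<^bsub>subm M N\<^esub> x = \<zero>\<^bsub>subm M N\<^esub>"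
      using N by (intro bexI[of _ "\<ominus> x"]) (auto simp: rsubmod_def M.l_neg subset_iff)
  qed (use N in \<open>auto simp: rsubmod_def subset_iff M.a_ac\<close>)
  then show ?thesis
    using N is_right_module by (auto simp: right_module_def rsubmod_def subset_iff)
qed

lemma subm_minus:
  assumes N: "rsubmod R M N" and x: "x \<in> N"
  shows "\<ominus>\<^bsub>subm M N\<^esub> x = \<ominus> x"
proof -
  interpret N: abelian_group "subm M N"
    using right_module_subm[OF N] by (simp add: right_module_def)
  show ?thesis
    using N x by (intro N.minus_equality) (auto simp: rsubmod_def M.l_neg subset_iff)
qed

lemma rsubmod_subm_iff:
  assumes N: "rsubmod R M N"
  shows "rsubmod R (subm M N) N' \<longleftrightarrow> rsubmod R M N' \<and> N' \<subseteq> N"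
  using N by (auto simp: rsubmod_def subm_minus[OF N] subset_iff)

lemma finsum_subm:
  assumes N: "rsubmod R M N" and A: "finite A" and h: "h \<in> A \<rightarrow> N"
  shows "finsum (subm M N) h A = finsum M h A"
proof -
  interpret N: abelian_group "subm M N"
    using right_module_subm[OF N] by (simp add: right_module_def)
  show ?thesis
    using A h
  proof (induction A rule: finite_induct)
    case (insert a A)
    then have "h \<in> A \<rightarrow> carrier M" "h a \<in> carrier M"
      using rsubmod_subset[OF N] by auto
    then show ?case
      using insert N.finsum_insert[of A a h] by (simp add: M.finsum_insert)
  qed simp
qed

end

definition lin_span :: "'a ring \<Rightarrow> ('a, 'b) module \<Rightarrow> 'b set \<Rightarrow> 'b set" where
  "lin_span R M S = {x. \<exists>c\<in>S \<rightarrow> carrier R. x = (\<Oplus>\<^bsub>M\<^esub> s\<in>S. c s \<odot>\<^bsub>M\<^esub> s)}"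

lemma fin_gen_iff_lin_span:
  "fin_gen R M \<longleftrightarrow> (\<exists>S. finite S \<and> S \<subseteq> carrier M \<and> carrier M \<subseteq> lin_span R M S)"
  by (auto simp: fin_gen_def lin_span_def)

context rmodule
begin

context
  fixes S assumes S: "finite S" "S \<subseteq> carrier M"
begin

lemma lin_span_subset: "lin_span R M S \<subseteq> carrier M"
  using S by (auto simp: lin_span_def Pi_iff subset_iff intro!: M.finsum_closed)

lemma zero_in_lin_span: "\<zero> \<in> lin_span R M S"
proof -
  have "(\<Oplus>s\<in>S. \<zero>\<^bsub>R\<^esub> \<odot> s) = (\<Oplus>s\<in>S. \<zero>)"
    using S by (intro M.finsum_cong') auto
  then show ?thesis
    by (auto simp: lin_span_def M.finsum_zero intro!: bexI[of _ "\<lambda>_. \<zero>\<^bsub>R\<^esub>"])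
qed

lemma lin_span_add: "x \<in> lin_span R M S \<Longrightarrow> y \<in> lin_span R M S \<Longrightarrow> x \<oplus> y \<in> lin_span R M S"
proof -
  assume "x \<in> lin_span R M S" "y \<in> lin_span R M S"
  then obtain c d where c: "c \<in> S \<rightarrow> carrier R" "x = (\<Oplus>s\<in>S. c s \<odot> s)"
    and d: "d \<in> S \<rightarrow> carrier R" "y = (\<Oplus>s\<in>S. d s \<odot> s)"
    by (auto simp: lin_span_def)
  have "(\<Oplus>s\<in>S. (c s \<oplus>\<^bsub>R\<^esub> d s) \<odot> s) = (\<Oplus>s\<in>S. c s \<odot> s \<oplus> d s \<odot> s)"
    using S c d by (intro M.finsum_cong') (auto simp: smult_l_distr Pi_iff subset_iff)
  also have "\<dots> = x \<oplus> y"
    using S c d by (simp add: M.finsum_addf Pi_iff subset_iff)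
  finally show ?thesis
    using c d by (auto simp: lin_span_def intro!: bexI[of _ "\<lambda>s. c s \<oplus>\<^bsub>R\<^esub> d s"])
qed

lemma smult_in_lin_span: "r \<in> carrier R \<Longrightarrow> s \<in> S \<Longrightarrow> r \<odot> s \<in> lin_span R M S"
proof -
  assume r: "r \<in> carrier R" and s: "s \<in> S"
  have "(\<Oplus>t\<in>S. (if s = t then r else \<zero>\<^bsub>R\<^esub>) \<odot> t) = (\<Oplus>t\<in>S. if s = t then r \<odot> t else \<zero>)"
    using S r by (intro M.finsum_cong') auto
  also have "\<dots> = r \<odot> s"
    using S r s by (intro M.finsum_singleton) auto
  finally show ?thesis
    using r by (auto simp: lin_span_def intro!: bexI[of _ "\<lambda>t. if s = t then r else \<zero>\<^bsub>R\<^esub>"])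
qed

lemma finsum_in_lin_span:
  "finite A \<Longrightarrow> h \<in> A \<rightarrow> lin_span R M S \<Longrightarrow> finsum M h A \<in> lin_span R M S"
proof (induction A rule: finite_induct)
  case (insert a A)
  then show ?case
    using lin_span_subset by (auto simp: M.finsum_insert Pi_iff subset_iff intro: lin_span_add)
qed (simp add: zero_in_lin_span)

end

lemma lin_span_mono:
  assumes "S \<subseteq> T" "finite T" "T \<subseteq> carrier M"
  shows "lin_span R M S \<subseteq> lin_span R M T"
  using assms finite_subset[OF assms(1,2)]
  by (auto simp: lin_span_def [of R M S] intro!: finsum_in_lin_span smult_in_lin_span)

lemma lin_span_subm:
  assumes N: "rsubmod R M N" and S: "finite S" "S \<subseteq> N"
  shows "lin_span R (subm M N) S = lin_span R M S"
proof -
  have "(\<Oplus>\<^bsub>subm M N\<^esub> s\<in>S. c s \<odot> s) = (\<Oplus>s\<in>S. c s \<odot> s)" if "c \<in> S \<rightarrow> carrier R" for c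
    using that N S by (intro finsum_subm) (auto simp: rsubmod_def subset_iff Pi_iff)
  then show ?thesis
    by (auto simp: lin_span_def)
qed

lemma modL_zero_subm: "modL R (subm M {\<zero>})"
proof -
  have "lin_span R M {} = {\<zero>}"
    by (simp add: lin_span_def finsum_def finprod_def)
  then have "fin_gen R (subm M {\<zero>})"
    using lin_span_subm[OF rsubmod_zero_set] by (auto simp: fin_gen_iff_lin_span)
  then show ?thesis
    by (simp add: modL_def right_module_subm[OF rsubmod_zero_set])
qed

end

section \<open>Homomorphisms\<close>

lemma rhom_comp: "rhom R M N f \<Longrightarrow> rhom R N P g \<Longrightarrow> rhom R M P (g \<circ> f)"
  by (auto simp: rhom_def Pi_def)

lemma rhom_inclusion: "N \<subseteq> carrier M \<Longrightarrow> rhom R (subm M N) M id"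
  by (auto simp: rhom_def subm_def)

lemma rhom_corestrict: "rhom R M N f \<Longrightarrow> f ` carrier M \<subseteq> N' \<Longrightarrow> rhom R M (subm N N') f"
  by (auto simp: rhom_def subm_def)

locale rmodule_hom = M: rmodule R M + N: rmodule R N
  for R :: "'a ring" and M :: "('a, 'b) module" and N :: "('a, 'b) module" +
  fixes f :: "'b \<Rightarrow> 'b"
  assumes is_rhom: "rhom R M N f"

lemma rmodule_homI: "right_module R M \<Longrightarrow> right_module R N \<Longrightarrow> rhom R M N f \<Longrightarrow> rmodule_hom R M N f"
  by (simp add: rmodule_hom_def rmodule_hom_axioms_def rmodule_def)

context rmodule_hom
begin

lemma hom_closed [intro, simp]: "x \<in> carrier M \<Longrightarrow> f x \<in> carrier N"
  using is_rhom by (auto simp: rhom_def)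

lemma hom_add: "x \<in> carrier M \<Longrightarrow> y \<in> carrier M \<Longrightarrow> f (x \<oplus>\<^bsub>M\<^esub> y) = f x \<oplus>\<^bsub>N\<^esub> f y"
  using is_rhom by (simp add: rhom_def)

lemma hom_smult: "r \<in> carrier R \<Longrightarrow> x \<in> carrier M \<Longrightarrow> f (r \<odot>\<^bsub>M\<^esub> x) = r \<odot>\<^bsub>N\<^esub> f x"
  using is_rhom by (simp add: rhom_def)

lemma hom_zero [simp]: "f \<zero>\<^bsub>M\<^esub> = \<zero>\<^bsub>N\<^esub>"
  using hom_add[of "\<zero>\<^bsub>M\<^esub>" "\<zero>\<^bsub>M\<^esub>"] by simp

lemma hom_minus: "x \<in> carrier M \<Longrightarrow> f (\<ominus>\<^bsub>M\<^esub> x) = \<ominus>\<^bsub>N\<^esub> f x"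
  by (rule N.M.minus_equality[symmetric]) (simp_all add: hom_add[symmetric] M.M.l_neg)

lemma hom_diff: "x \<in> carrier M \<Longrightarrow> y \<in> carrier M \<Longrightarrow> f (x \<ominus>\<^bsub>M\<^esub> y) = f x \<ominus>\<^bsub>N\<^esub> f y"
  by (simp add: M.M.minus_eq N.M.minus_eq hom_add hom_minus)

lemma hom_finsum: "finite A \<Longrightarrow> h \<in> A \<rightarrow> carrier M \<Longrightarrow> f (finsum M h A) = (\<Oplus>\<^bsub>N\<^esub> a\<in>A. f (h a))"
proof (induction A rule: finite_induct)
  case (insert a A)
  then have h: "h a \<in> carrier M" "h \<in> A \<rightarrow> carrier M"
    by auto
  have "f (finsum M h (insert a A)) = f (h a \<oplus>\<^bsub>M\<^esub> finsum M h A)"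
    using insert h by simp
  also have "\<dots> = f (h a) \<oplus>\<^bsub>N\<^esub> (\<Oplus>\<^bsub>N\<^esub> a\<in>A. f (h a))"
    using insert h by (simp add: hom_add)
  also have "\<dots> = (\<Oplus>\<^bsub>N\<^esub> a\<in>insert a A. f (h a))"
    using insert h by (simp add: Pi_iff)
  finally show ?case .
qed simp

lemma hom_finsum_smult:
  assumes "finite A" "c \<in> A \<rightarrow> carrier R" "\<And>a. a \<in> A \<Longrightarrow> g a \<in> carrier M"
  shows "f (\<Oplus>\<^bsub>M\<^esub> a\<in>A. c a \<odot>\<^bsub>M\<^esub> g a) = (\<Oplus>\<^bsub>N\<^esub> a\<in>A. c a \<odot>\<^bsub>N\<^esub> f (g a))"
proof -
  have "f (\<Oplus>\<^bsub>M\<^esub> a\<in>A. c a \<odot>\<^bsub>M\<^esub> g a) = (\<Oplus>\<^bsub>N\<^esub> a\<in>A. f (c a \<odot>\<^bsub>M\<^esub> g a))"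
    using assms by (intro hom_finsum) auto
  also have "\<dots> = (\<Oplus>\<^bsub>N\<^esub> a\<in>A. c a \<odot>\<^bsub>N\<^esub> f (g a))"
    using assms by (intro N.M.finsum_cong') (auto simp: hom_smult Pi_iff)
  finally show ?thesis .
qed

lemma hom_eq_iff:
  assumes x: "x \<in> carrier M" and y: "y \<in> carrier M"
  shows "f x = f y \<longleftrightarrow> x \<ominus>\<^bsub>M\<^esub> y \<in> kern M N f"
proof -
  have "f x \<ominus>\<^bsub>N\<^esub> f y = \<zero>\<^bsub>N\<^esub> \<longleftrightarrow> f x = f y"
    using x y by (simp add: N.M.diff_eq_zero_iff)
  then show ?thesis
    using x y by (auto simp: kern_def hom_diff)
qed

lemma rsubmod_kern: "rsubmod R M (kern M N f)"
  by (auto simp: rsubmod_def kern_def hom_add hom_minus hom_smult)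

lemma rsubmod_image:
  assumes X: "rsubmod R M X"
  shows "rsubmod R N (f ` X)"
proof -
  have X_sub: "X \<subseteq> carrier M"
    using X by (simp add: rsubmod_def)
  have "f a \<oplus>\<^bsub>N\<^esub> f b \<in> f ` X" if "a \<in> X" "b \<in> X" for a b
    by (rule image_eqI[of _ _ "a \<oplus>\<^bsub>M\<^esub> b"]) (use that X subsetD[OF X_sub] in \<open>auto simp: rsubmod_def hom_add\<close>)
  moreover have "\<ominus>\<^bsub>N\<^esub> f a \<in> f ` X" if "a \<in> X" for a
    by (rule image_eqI[of _ _ "\<ominus>\<^bsub>M\<^esub> a"]) (use that X subsetD[OF X_sub] in \<open>auto simp: rsubmod_def hom_minus\<close>)
  moreover have "r \<odot>\<^bsub>N\<^esub> f a \<in> f ` X" if "r \<in> carrier R" "a \<in> X" for r a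
    by (rule image_eqI[of _ _ "r \<odot>\<^bsub>M\<^esub> a"]) (use that X subsetD[OF X_sub] in \<open>auto simp: rsubmod_def hom_smult\<close>)
  moreover have "\<zero>\<^bsub>N\<^esub> \<in> f ` X"
    by (rule image_eqI[of _ _ "\<zero>\<^bsub>M\<^esub>"]) (use X in \<open>auto simp: rsubmod_def\<close>)
  ultimately show ?thesis
    using X_sub by (auto simp: rsubmod_def)
qed

lemma rsubmod_vimage: "rsubmod R N Z \<Longrightarrow> rsubmod R M {x \<in> carrier M. f x \<in> Z}"
  by (auto simp: rsubmod_def hom_add hom_minus hom_smult)

lemma rhom_restrict: "X \<subseteq> carrier M \<Longrightarrow> f ` X \<subseteq> Z \<Longrightarrow> rhom R (subm M X) (subm N Z) f"
  using is_rhom by (auto simp: rhom_def subm_def subset_iff)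

lemma rmodule_hom_restrict:
  "rsubmod R M X \<Longrightarrow> rsubmod R N Z \<Longrightarrow> f ` X \<subseteq> Z \<Longrightarrow> rmodule_hom R (subm M X) (subm N Z) f"
  by (intro rmodule_homI M.right_module_subm N.right_module_subm rhom_restrict) (simp_all add: M.rsubmod_subset)

lemma zero_mod_image: "is_zero_mod M \<Longrightarrow> f ` carrier M = carrier N \<Longrightarrow> is_zero_mod N"
  by (auto simp: is_zero_mod_def)

lemma bij_betw_complement_kern:
  assumes surj: "f ` carrier M = carrier N" and C: "rsubmod R M C"
    and disj: "kern M N f \<inter> C = {\<zero>\<^bsub>M\<^esub>}"
    and sum: "\<forall>x\<in>carrier M. \<exists>a\<in>kern M N f. \<exists>c\<in>C. x = a \<oplus>\<^bsub>M\<^esub> c"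
  shows "bij_betw f C (carrier N)"
proof -
  have C_sub: "C \<subseteq> carrier M"
    using C by (rule M.rsubmod_subset)
  have "carrier N \<subseteq> f ` C"
  proof
    fix y assume "y \<in> carrier N"
    then obtain x where x: "x \<in> carrier M" "y = f x"
      using surj by auto
    then obtain a c where ac: "a \<in> kern M N f" "c \<in> C" "x = a \<oplus>\<^bsub>M\<^esub> c"
      using sum by blast
    then have "y = f c"
      using x C_sub by (auto simp: hom_add kern_def)
    then show "y \<in> f ` C"
      using ac by blast
  qed
  moreover have "inj_on f C"
  proof (rule inj_onI)
    fix x y assume xy: "x \<in> C" "y \<in> C" "f x = f y"
    then have "x \<ominus>\<^bsub>M\<^esub> y \<in> kern M N f \<inter> C"
      using hom_eq_iff[of x y] C_sub M.rsubmod_diff[OF C] by auto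
    moreover have "x \<in> carrier M" "y \<in> carrier M"
      using xy C_sub by auto
    ultimately show "x = y"
      using disj by (auto simp: M.M.diff_eq_zero_iff)
  qed
  ultimately show ?thesis
    using C_sub by (auto simp: bij_betw_def)
qed

lemma image_lin_span:
  assumes S: "finite S" "S \<subseteq> carrier M"
  shows "f ` lin_span R M S = lin_span R N (f ` S)"
proof
  have fS: "finite (f ` S)" "f ` S \<subseteq> carrier N"
    using S by auto
  show "f ` lin_span R M S \<subseteq> lin_span R N (f ` S)"
  proof
    fix y assume "y \<in> f ` lin_span R M S"
    then obtain c where c: "c \<in> S \<rightarrow> carrier R" "y = f (\<Oplus>\<^bsub>M\<^esub> s\<in>S. c s \<odot>\<^bsub>M\<^esub> s)"
      unfolding lin_span_def by auto
    then have "y = (\<Oplus>\<^bsub>N\<^esub> s\<in>S. c s \<odot>\<^bsub>N\<^esub> f s)"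
      using S by (simp add: hom_finsum_smult subset_iff)
    also have "\<dots> \<in> lin_span R N (f ` S)"
      using S c by (intro N.finsum_in_lin_span[OF fS]) (auto intro!: N.smult_in_lin_span[OF fS])
    finally show "y \<in> lin_span R N (f ` S)" .
  qed
  show "lin_span R N (f ` S) \<subseteq> f ` lin_span R M S"
  proof
    fix y assume "y \<in> lin_span R N (f ` S)"
    then obtain d where d: "d \<in> f ` S \<rightarrow> carrier R" "y = (\<Oplus>\<^bsub>N\<^esub> t\<in>f ` S. d t \<odot>\<^bsub>N\<^esub> t)"
      unfolding lin_span_def by auto
    define lift where "lift = inv_into S f"
    have lift: "lift t \<in> S" "f (lift t) = t" if "t \<in> f ` S" for t
      using that by (simp_all add: lift_def inv_into_into f_inv_into_f)
    define w where "w = (\<Oplus>\<^bsub>M\<^esub> t\<in>f ` S. d t \<odot>\<^bsub>M\<^esub> lift t)"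
    have "f w = (\<Oplus>\<^bsub>N\<^esub> t\<in>f ` S. d t \<odot>\<^bsub>N\<^esub> f (lift t))"
      unfolding w_def using fS d lift S by (intro hom_finsum_smult) auto
    also have "\<dots> = y"
      unfolding d(2) using d lift S by (intro N.M.finsum_cong') (auto simp: Pi_iff subset_iff)
    finally have "f w = y" .
    moreover have "w \<in> lin_span R M S"
      unfolding w_def using fS d lift by (intro M.finsum_in_lin_span[OF S]) (auto intro!: M.smult_in_lin_span[OF S])
    ultimately show "y \<in> f ` lin_span R M S"
      by blast
  qed
qed

lemma fin_gen_image:
  assumes M: "fin_gen R M" and surj: "f ` carrier M = carrier N"
  shows "fin_gen R N"
proof -
  obtain S where S: "finite S" "S \<subseteq> carrier M" "carrier M \<subseteq> lin_span R M S"
    using M by (auto simp: fin_gen_iff_lin_span)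
  then have "carrier N \<subseteq> lin_span R N (f ` S)"
    using surj image_lin_span[OF S(1,2)] by blast
  moreover have "finite (f ` S)" "f ` S \<subseteq> carrier N"
    using S by auto
  ultimately show ?thesis
    unfolding fin_gen_iff_lin_span by blast
qed

(* Generators of the kernel together with lifts of generators of the image generate. *)

lemma fin_gen_extension:
  assumes surj: "f ` carrier M = carrier N"
    and ker: "fin_gen R (subm M (kern M N f))" and N: "fin_gen R N"
  shows "fin_gen R M"
proof -
  obtain T where T: "finite T" "T \<subseteq> kern M N f"
    and "kern M N f \<subseteq> lin_span R (subm M (kern M N f)) T"
    using ker unfolding fin_gen_iff_lin_span by auto
  then have T_span: "kern M N f \<subseteq> lin_span R M T"
    using M.lin_span_subm[OF rsubmod_kern T] by simp
  obtain U where U: "finite U" "U \<subseteq> carrier N" "carrier N \<subseteq> lin_span R N U"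
    using N unfolding fin_gen_iff_lin_span by blast
  define L where "L = inv_into (carrier M) f ` U"
  have "f (inv_into (carrier M) f u) = u" if "u \<in> U" for u
    using that U(2) surj f_inv_into_f[of u f "carrier M"] by auto
  then have L: "finite L" "L \<subseteq> carrier M" "f ` L = U"
    using U(1,2) surj by (auto simp: L_def inv_into_into image_image cong: image_cong)
  define S where "S = T \<union> L"
  have S: "finite S" "S \<subseteq> carrier M"
    using T L by (auto simp: S_def kern_def)
  have "x \<in> lin_span R M S" if x: "x \<in> carrier M" for x
  proof -
    obtain w where w: "w \<in> lin_span R M L" "f w = f x"
      using U(3) x image_lin_span[OF L(1,2)] L(3) by (metis hom_closed imageE subsetD)
    have w_M: "w \<in> carrier M"
      using w(1) M.lin_span_subset[OF L(1,2)] by blast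
    have "x \<ominus>\<^bsub>M\<^esub> w \<in> lin_span R M S"
      using hom_eq_iff[OF x w_M] w(2) T_span M.lin_span_mono[of T S] S by (auto simp: S_def)
    moreover have "w \<in> lin_span R M S"
      using w(1) M.lin_span_mono[of L S] S by (auto simp: S_def)
    ultimately have "(x \<ominus>\<^bsub>M\<^esub> w) \<oplus>\<^bsub>M\<^esub> w \<in> lin_span R M S"
      by (rule M.lin_span_add[OF S])
    then show ?thesis
      using x w_M by (simp add: M.M.minus_eq M.M.a_assoc M.M.l_neg)
  qed
  then have "carrier M \<subseteq> lin_span R M S"
    by blast
  then show ?thesis
    using S unfolding fin_gen_iff_lin_span by blast
qed

end

lemma quot_map_rmodule_hom: "quot_map R B C g \<Longrightarrow> rmodule_hom R B C g"
  by (simp add: quot_map_def modL_def rmodule_homI)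

section \<open>Quotient modules\<close>

(* Quotients live on the element type of M: each coset of S is represented by a chosen element. *)

definition qrep :: "('a, 'b) module \<Rightarrow> 'b set \<Rightarrow> 'b \<Rightarrow> 'b" where
  "qrep M S x = (SOME y. y \<in> carrier M \<and> x \<ominus>\<^bsub>M\<^esub> y \<in> S)"

definition qmod :: "('a, 'b) module \<Rightarrow> 'b set \<Rightarrow> ('a, 'b) module" where
  "qmod M S = M\<lparr>carrier := qrep M S ` carrier M, add := \<lambda>x y. qrep M S (x \<oplus>\<^bsub>M\<^esub> y),
     zero := qrep M S \<zero>\<^bsub>M\<^esub>, smult := \<lambda>r x. qrep M S (r \<odot>\<^bsub>M\<^esub> x)\<rparr>"

lemma qmod_simps [simp]:
  "carrier (qmod M S) = qrep M S ` carrier M"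
  "add (qmod M S) = (\<lambda>x y. qrep M S (x \<oplus>\<^bsub>M\<^esub> y))"
  "zero (qmod M S) = qrep M S \<zero>\<^bsub>M\<^esub>"
  "smult (qmod M S) = (\<lambda>r x. qrep M S (r \<odot>\<^bsub>M\<^esub> x))"
  by (simp_all add: qmod_def)

locale rmodule_quotient = rmodule R M for R :: "'a ring" and M :: "('a, 'b) module" (structure) +
  fixes S :: "'b set"
  assumes rsubmod_S: "rsubmod R M S"
begin

abbreviation "\<rho> \<equiv> qrep M S"

lemma qrep_spec: "x \<in> carrier M \<Longrightarrow> \<rho> x \<in> carrier M \<and> x \<ominus> \<rho> x \<in> S"
  unfolding qrep_def by (rule someI[of _ x]) (use rsubmod_S in \<open>simp add: rsubmod_def M.r_neg M.minus_eq\<close>)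

lemma qrep_closed [intro, simp]: "x \<in> carrier M \<Longrightarrow> \<rho> x \<in> carrier M"
  using qrep_spec by blast

lemma qrep_minus_in: "x \<in> carrier M \<Longrightarrow> \<rho> x \<ominus> x \<in> S"
  using qrep_spec[of x] rsubmod_S M.minus_diff_eq[of x "\<rho> x"] by (auto simp: rsubmod_def)

lemma qrep_eq_iff:
  assumes x: "x \<in> carrier M" and y: "y \<in> carrier M"
  shows "\<rho> x = \<rho> y \<longleftrightarrow> x \<ominus> y \<in> S"
proof
  assume xy: "x \<ominus> y \<in> S"
  then have yx: "y \<ominus> x \<in> S"
    using x y rsubmod_S by (metis M.minus_diff_eq rsubmod_def)
  have "x \<ominus> z \<in> S \<longleftrightarrow> y \<ominus> z \<in> S" if z: "z \<in> carrier M" for z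
    using rsubmod_S xy yx M.diff_add_diff[OF x y z] M.diff_add_diff[OF y x z]
    by (metis rsubmod_def)
  then have "(\<lambda>z. z \<in> carrier M \<and> x \<ominus> z \<in> S) = (\<lambda>z. z \<in> carrier M \<and> y \<ominus> z \<in> S)"
    by blast
  then show "\<rho> x = \<rho> y"
    by (simp add: qrep_def)
next
  assume "\<rho> x = \<rho> y"
  then have "x \<ominus> \<rho> y \<in> S" "\<rho> y \<ominus> y \<in> S"
    using qrep_spec[OF x] qrep_minus_in[OF y] by auto
  then have "(x \<ominus> \<rho> y) \<oplus> (\<rho> y \<ominus> y) \<in> S"
    using rsubmod_S by (simp add: rsubmod_def)
  then show "x \<ominus> y \<in> S"
    using M.diff_add_diff[OF x _ y, of "\<rho> y"] y by simp
qed

lemma qrep_idem [simp]: "x \<in> carrier M \<Longrightarrow> \<rho> (\<rho> x) = \<rho> x"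
  using qrep_spec[of x] by (simp add: qrep_eq_iff[symmetric])

lemma qrep_add_left [simp]: "x \<in> carrier M \<Longrightarrow> y \<in> carrier M \<Longrightarrow> \<rho> (\<rho> x \<oplus> y) = \<rho> (x \<oplus> y)"
  by (simp add: qrep_eq_iff M.add_diff_cancel_right qrep_minus_in)

lemma qrep_add_right [simp]: "x \<in> carrier M \<Longrightarrow> y \<in> carrier M \<Longrightarrow> \<rho> (x \<oplus> \<rho> y) = \<rho> (x \<oplus> y)"
  using qrep_add_left[of y x] by (simp add: M.a_comm)

lemma qrep_smult [simp]: "r \<in> carrier R \<Longrightarrow> x \<in> carrier M \<Longrightarrow> \<rho> (r \<odot> \<rho> x) = \<rho> (r \<odot> x)"
  using rsubmod_S qrep_minus_in[of x] by (simp add: qrep_eq_iff smult_diff_right[symmetric] rsubmod_def)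

lemma qmod_carrier_iff: "x \<in> carrier (qmod M S) \<longleftrightarrow> x \<in> carrier M \<and> \<rho> x = x"
  by (auto intro: image_eqI[of x \<rho>, OF sym])

lemma right_module_qmod: "right_module R (qmod M S)"
proof -
  have "abelian_group (qmod M S)"
  proof (rule abelian_groupI)
    fix x y z
    assume "x \<in> carrier (qmod M S)" "y \<in> carrier (qmod M S)" "z \<in> carrier (qmod M S)"
    then show "x \<oplus>\<^bsub>qmod M S\<^esub> y \<oplus>\<^bsub>qmod M S\<^esub> z = x \<oplus>\<^bsub>qmod M S\<^esub> (y \<oplus>\<^bsub>qmod M S\<^esub> z)"
      by (auto simp: M.a_assoc)
  next
    fix x y assume "x \<in> carrier (qmod M S)" "y \<in> carrier (qmod M S)"
    then show "x \<oplus>\<^bsub>qmod M S\<^esub> y = y \<oplus>\<^bsub>qmod M S\<^esub> x"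
      by (auto simp: M.a_comm)
  next
    fix x assume "x \<in> carrier (qmod M S)"
    then obtain a where "a \<in> carrier M" "x = \<rho> a"
      by auto
    then show "\<exists>y\<in>carrier (qmod M S). y \<oplus>\<^bsub>qmod M S\<^esub> x = \<zero>\<^bsub>qmod M S\<^esub>"
      by (auto intro!: bexI[of _ "\<rho> (\<ominus> a)"] simp: M.l_neg)
  qed auto
  then show ?thesis
    using R.ring_axioms
    by (auto simp del: qmod_simps(1)
        simp: qmod_carrier_iff right_module_def smult_l_distr smult_r_distr smult_assoc)
qed

lemma rhom_qrep: "rhom R M (qmod M S) \<rho>"
  by (auto simp: rhom_def)

lemma kern_qrep: "kern M (qmod M S) \<rho> = S"
  using rsubmod_S by (auto simp: kern_def qrep_eq_iff rsubmod_def M.diff_zero)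

end

lemma exists_quot_map_kern:
  assumes M: "modL R M" and S: "rsubmod R M S"
  shows "\<exists>Q q. quot_map R M Q q \<and> kern M Q q = S"
proof -
  interpret rmodule_quotient R M S
    using M S by (simp add: rmodule_quotient_def rmodule_quotient_axioms_def rmodule_def modL_def)
  interpret rmodule_hom R M "qmod M S" \<rho>
    by unfold_locales (simp_all add: right_module_qmod rhom_qrep)
  have "fin_gen R (qmod M S)"
    using M fin_gen_image by (simp add: modL_def)
  then show ?thesis
    using M right_module_qmod rhom_qrep kern_qrep
    by (intro exI[of _ "qmod M S"] exI[of _ \<rho>]) (simp add: quot_map_def modL_def)
qed

lemma quot_map_factor:
  assumes g: "quot_map R B C g" and h: "rhom R B D h" and D: "right_module R D"
    and ker: "kern B C g \<subseteq> kern B D h"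
  obtains h' where "rhom R C D h'" "\<And>b. b \<in> carrier B \<Longrightarrow> h' (g b) = h b"
proof -
  interpret g: rmodule_hom R B C g
    using g by (rule quot_map_rmodule_hom)
  interpret h: rmodule_hom R B D h
    using g h D by (simp add: quot_map_def modL_def rmodule_homI)
  have C_eq: "carrier C = g ` carrier B"
    using g by (simp add: quot_map_def)
  define h' where "h' c = h (inv_into (carrier B) g c)" for c
  have h'g: "h' (g b) = h b" if b: "b \<in> carrier B" for b
  proof -
    have b': "inv_into (carrier B) g (g b) \<in> carrier B" "g (inv_into (carrier B) g (g b)) = g b"
      using b by (auto intro: inv_into_into f_inv_into_f)
    then show ?thesis
      using b ker g.hom_eq_iff h.hom_eq_iff by (auto simp: h'_def)
  qed
  have "rhom R C D h'"
    unfolding rhom_def C_eq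
    by (auto simp: h'g g.hom_add[symmetric] g.hom_smult[symmetric] h.hom_add h.hom_smult)
  with h'g show ?thesis
    using that by blast
qed

lemma ses_kern:
  assumes g: "quot_map R B C g" and K: "modL R (subm B (kern B C g))"
  shows "ses R (subm B (kern B C g)) B C id g"
proof -
  interpret rmodule_hom R B C g
    using g by (rule quot_map_rmodule_hom)
  show ?thesis
    using g K M.rsubmod_subset[OF rsubmod_kern] rhom_inclusion[of "kern B C g" B R]
    by (auto simp: ses_def quot_map_def)
qed

lemma exists_zero_module: "ring R \<Longrightarrow> \<exists>Z :: ('a, 'b) module. modL R Z \<and> is_zero_mod Z"
proof -
  assume R: "ring R"
  define Z :: "('a, 'b) module" where "Z = \<lparr>carrier = {undefined}, mult = (\<lambda>_ _. undefined),
    one = undefined, zero = undefined, add = (\<lambda>_ _. undefined), smult = (\<lambda>_ _. undefined)\<rparr>"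
  have "abelian_group Z"
    by (rule abelian_groupI) (auto simp: Z_def)
  then have "right_module R Z"
    using R by (auto simp: right_module_def Z_def)
  moreover have "fin_gen R Z"
    unfolding fin_gen_def by (intro exI[of _ "{}"]) (auto simp: Z_def finsum_def finprod_def)
  ultimately show ?thesis
    by (auto simp: modL_def is_zero_mod_def Z_def)
qed

section \<open>Extension-closed classes and additive functions\<close>

lemma ext_closedD: "ses R A B C f g \<Longrightarrow> ext_closed R P \<Longrightarrow> P A \<Longrightarrow> P C \<Longrightarrow> P B"
  unfolding ext_closed_def by blast

lemma additive_funD: "additive_fun R \<theta> \<Longrightarrow> ses R A B C f g \<Longrightarrow> \<theta> B = \<theta> A + \<theta> C"
  unfolding additive_fun_def by blast

lemma additive_fun_zero_mod:
  assumes \<theta>: "additive_fun R \<theta>" and Z: "modL R Z" "is_zero_mod Z"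
  shows "\<theta> Z = 0"
proof -
  have "ses R Z Z Z id id"
    using Z by (auto simp: ses_def rhom_def kern_def is_zero_mod_def)
  then have "\<theta> Z = \<theta> Z + \<theta> Z"
    by (rule additive_funD[OF \<theta>])
  then show ?thesis
    by simp
qed

lemma ses_zero_mod:
  assumes ses: "ses R A B C f g" and A: "is_zero_mod A" and C: "is_zero_mod C"
  shows "is_zero_mod B"
proof -
  interpret f: rmodule_hom R A B f
    using ses by (simp add: ses_def modL_def rmodule_homI)
  interpret g: rmodule_hom R B C g
    using ses by (simp add: ses_def modL_def rmodule_homI)
  have "carrier B = kern B C g"
    using C g.hom_closed by (auto simp: kern_def is_zero_mod_def)
  also have "\<dots> = f ` carrier A"
    using ses by (simp add: ses_def)
  finally show ?thesis
    using A by (simp add: is_zero_mod_def)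
qed

lemma ext_closed_nonneg: "additive_fun R \<theta> \<Longrightarrow> ext_closed R (\<lambda>M. 0 \<le> \<theta> M)"
  unfolding ext_closed_def by (auto dest: additive_funD)

lemma ext_closed_zero_or_pos:
  assumes \<theta>: "additive_fun R \<theta>"
  shows "ext_closed R (\<lambda>M. is_zero_mod M \<or> 0 < \<theta> M)"
  unfolding ext_closed_def
proof (intro allI impI, elim conjE)
  fix A B C f g
  assume ses: "ses R A B C f g" and A: "is_zero_mod A \<or> 0 < \<theta> A" and C: "is_zero_mod C \<or> 0 < \<theta> C"
  have "\<theta> B = \<theta> A + \<theta> C"
    using \<theta> ses by (rule additive_funD)
  moreover have "is_zero_mod A \<Longrightarrow> \<theta> A = 0" "is_zero_mod C \<Longrightarrow> \<theta> C = 0"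
    using ses additive_fun_zero_mod[OF \<theta>] by (auto simp: ses_def)
  ultimately show "is_zero_mod B \<or> 0 < \<theta> B"
    using A C ses_zero_mod[OF ses] by fastforce
qed

section \<open>Strict quotients relative to a torsion class\<close>

locale torsion_class_of =
  fixes R :: "'a ring" and G :: "('a, 'b) modclass"
  assumes torsion_class: "torsion_class R G"
begin

lemma G_modL: "G M \<Longrightarrow> modL R M"
  using torsion_class[unfolded torsion_class_def, THEN conjunct1] by blast

lemma G_zero: "modL R M \<Longrightarrow> is_zero_mod M \<Longrightarrow> G M"
  using torsion_class[unfolded torsion_class_def, THEN conjunct2, THEN conjunct1] by blast

lemma G_ext: "ses R A B C f g \<Longrightarrow> G A \<Longrightarrow> G C \<Longrightarrow> G B"
  using torsion_class[unfolded torsion_class_def, THEN conjunct2, THEN conjunct2, THEN conjunct2,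
      THEN conjunct1, unfolded ext_closed_def] by blast

lemma G_quot_map: "quot_map R B C g \<Longrightarrow> G B \<Longrightarrow> G C"
  using torsion_class[unfolded torsion_class_def, THEN conjunct2, THEN conjunct2, THEN conjunct2,
      THEN conjunct2] by blast

lemma G_image:
  assumes B: "modL R B" and C: "modL R C" and g: "rhom R B C g"
    and X: "rsubmod R B X" and GX: "G (subm B X)"
  shows "G (subm C (g ` X))"
proof -
  interpret rmodule_hom R B C g
    using B C g by (simp add: rmodule_homI modL_def)
  interpret X: rmodule_hom R "subm B X" "subm C (g ` X)" g
    using X by (simp add: rmodule_hom_restrict rsubmod_image)
  have "fin_gen R (subm C (g ` X))"
    using G_modL[OF GX] by (intro X.fin_gen_image) (simp_all add: modL_def)
  then have "quot_map R (subm B X) (subm C (g ` X)) g"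
    using G_modL[OF GX] X.N.is_right_module X.is_rhom by (simp add: quot_map_def modL_def)
  then show ?thesis
    using GX by (rule G_quot_map)
qed

lemma G_subm_by_kern_image:
  assumes B: "modL R B" and C: "modL R C" and g: "rhom R B C g" and X: "rsubmod R B X"
    and G_kern: "G (subm B (X \<inter> kern B C g))" and G_image: "G (subm C (g ` X))"
  shows "G (subm B X)"
proof -
  interpret rmodule_hom R B C g
    using B C g by (simp add: rmodule_homI modL_def)
  interpret X: rmodule_hom R "subm B X" "subm C (g ` X)" g
    using X by (simp add: rmodule_hom_restrict rsubmod_image)
  have ker: "kern (subm B X) (subm C (g ` X)) g = X \<inter> kern B C g"
    using M.rsubmod_subset[OF X] by (auto simp: kern_def)
  have "fin_gen R (subm B X)"
    using G_modL[OF G_kern] G_modL[OF G_image] by (intro X.fin_gen_extension) (simp_all add: ker modL_def)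
  then have "quot_map R (subm B X) (subm C (g ` X)) g"
    using G_modL[OF G_image] X.M.is_right_module X.is_rhom by (simp add: quot_map_def modL_def)
  from ses_kern[OF this] have "ses R (subm B (X \<inter> kern B C g)) (subm B X) (subm C (g ` X)) id g"
    using G_modL[OF G_kern] by (simp add: ker)
  then show ?thesis
    using G_kern G_image by (rule G_ext)
qed

lemma strict_subobjI:
  assumes "rsubmod R B A" "G (subm B A)"
    and "\<And>B'. rsubmod R B B' \<Longrightarrow> G (subm B B') \<Longrightarrow> G (subm B (A \<inter> B'))"
  shows "strict_subobj R G B A"
  using assms by (simp add: strict_subobj_def subobj_def)

lemma strict_subobjD:
  "strict_subobj R G B A \<Longrightarrow> rsubmod R B B' \<Longrightarrow> G (subm B B') \<Longrightarrow> G (subm B (A \<inter> B'))"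
  by (simp add: strict_subobj_def subobj_def)

lemma strict_quotD:
  assumes "strict_quot R G B C g"
  shows "G B" "quot_map R B C g" "strict_subobj R G B (kern B C g)" "G (subm B (kern B C g))"
  using assms by (simp_all add: strict_quot_def strict_subobj_def subobj_def)

lemma strict_quot_comp:
  assumes g: "strict_quot R G B C g" and h: "strict_quot R G C D h"
  shows "strict_quot R G B D (h \<circ> g)"
proof -
  note g' = strict_quotD[OF g] and h' = strict_quotD[OF h]
  interpret g: rmodule_hom R B C g
    using g'(2) by (rule quot_map_rmodule_hom)
  interpret h: rmodule_hom R C D h
    using h'(2) by (rule quot_map_rmodule_hom)
  have B: "modL R B" and C: "modL R C" and surj_g: "g ` carrier B = carrier C"
    using g'(2) by (simp_all add: quot_map_def)
  define X where "X = kern B D (h \<circ> g)"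
  have X_eq: "X = {b \<in> carrier B. g b \<in> kern C D h}"
    by (auto simp: X_def kern_def)
  have X: "rsubmod R B X"
    unfolding X_eq by (rule g.rsubmod_vimage[OF h.rsubmod_kern])
  have G_X_Int: "G (subm B (X \<inter> B'))" if B': "rsubmod R B B'" "G (subm B B')" for B'
  proof (rule G_subm_by_kern_image[OF B C g.is_rhom g.M.rsubmod_Int[OF X B'(1)]])
    have "X \<inter> B' \<inter> kern B C g = kern B C g \<inter> B'"
      by (auto simp: X_eq kern_def)
    then show "G (subm B (X \<inter> B' \<inter> kern B C g))"
      using strict_subobjD[OF g'(3) B'] by simp
    have "g ` (X \<inter> B') = kern C D h \<inter> g ` B'"
      using g.M.rsubmod_subset[OF B'(1)] by (auto simp: X_eq)
    then show "G (subm C (g ` (X \<inter> B')))"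
      using strict_subobjD[OF h'(3) g.rsubmod_image[OF B'(1)] G_image[OF B C g.is_rhom B']] by simp
  qed
  have strict: "strict_subobj R G B X"
    using G_X_Int[of "carrier B"] g'(1) X g.M.rsubmod_subset[OF X]
    by (intro strict_subobjI G_X_Int) (simp_all add: Int_absorb2 g.M.rsubmod_carrier)
  have "(h \<circ> g) ` carrier B = carrier D"
    using surj_g h'(2) unfolding image_comp[symmetric] by (simp add: quot_map_def)
  then have "quot_map R B D (h \<circ> g)"
    using g'(2) h'(2) by (auto simp: quot_map_def intro: rhom_comp)
  with strict show ?thesis
    using g'(1) by (simp add: strict_quot_def X_def)
qed

lemma strict_quot_of_inj:
  assumes GB: "G B" and g: "quot_map R B C g" and inj: "inj_on g (carrier B)"
  shows "strict_quot R G B C g"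
proof -
  interpret rmodule_hom R B C g
    using g by (rule quot_map_rmodule_hom)
  have ker: "kern B C g = {\<zero>\<^bsub>B\<^esub>}"
    using inj by (auto simp: kern_def dest: inj_onD[of g _ _ "\<zero>\<^bsub>B\<^esub>"])
  have G_zero_subm: "G (subm B {\<zero>\<^bsub>B\<^esub>})"
    by (rule G_zero[OF M.modL_zero_subm]) (simp add: is_zero_mod_def)
  have "strict_subobj R G B {\<zero>\<^bsub>B\<^esub>}"
  proof (rule strict_subobjI[OF M.rsubmod_zero_set G_zero_subm])
    fix B' assume "rsubmod R B B'"
    then have "{\<zero>\<^bsub>B\<^esub>} \<inter> B' = {\<zero>\<^bsub>B\<^esub>}"
      by (auto simp: rsubmod_def)
    then show "G (subm B ({\<zero>\<^bsub>B\<^esub>} \<inter> B'))"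
      using G_zero_subm by simp
  qed
  then show ?thesis
    using GB g by (simp add: strict_quot_def ker)
qed

lemma strict_quot_restrict:
  assumes h: "strict_quot R G B D h" and A: "rsubmod R B A" and GA: "G (subm B A)"
  shows "strict_quot R G (subm B A) (subm D (h ` A)) h"
proof -
  note h' = strict_quotD[OF h]
  interpret rmodule_hom R B D h
    using h'(2) by (rule quot_map_rmodule_hom)
  have "G (subm D (h ` A))"
    using h'(2) A GA by (intro G_image) (simp_all add: quot_map_def)
  then have qm: "quot_map R (subm B A) (subm D (h ` A)) h"
    using G_modL[OF GA] rhom_restrict[OF M.rsubmod_subset[OF A]] by (simp add: quot_map_def G_modL)
  have ker: "kern (subm B A) (subm D (h ` A)) h = kern B D h \<inter> A"
    using M.rsubmod_subset[OF A] by (auto simp: kern_def)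
  have "strict_subobj R G (subm B A) (kern B D h \<inter> A)"
  proof (rule strict_subobjI)
    show "rsubmod R (subm B A) (kern B D h \<inter> A)"
      using M.rsubmod_subm_iff[OF A] M.rsubmod_Int[OF rsubmod_kern A] by simp
    show "G (subm (subm B A) (kern B D h \<inter> A))"
      using strict_subobjD[OF h'(3) A GA] by simp
  next
    fix B' assume "rsubmod R (subm B A) B'" "G (subm (subm B A) B')"
    then have B': "rsubmod R B B'" "B' \<subseteq> A" "G (subm B B')"
      using M.rsubmod_subm_iff[OF A] by simp_all
    then have "kern B D h \<inter> A \<inter> B' = kern B D h \<inter> B'"
      by blast
    then show "G (subm (subm B A) (kern B D h \<inter> A \<inter> B'))"
      using strict_subobjD[OF h'(3) B'(1,3)] by simp
  qed
  then show ?thesis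
    using GA qm by (simp add: strict_quot_def ker)
qed

lemma kern_factor:
  assumes g: "quot_map R B C g" and h: "rhom R B D h" and D: "right_module R D"
    and q: "rhom R D Q q" and Q: "right_module R Q"
    and q'g: "\<And>b. b \<in> carrier B \<Longrightarrow> q' (g b) = q (h b)" and ker_q: "kern D Q q = h ` kern B C g"
  shows "kern C Q q' = g ` kern B D h"
proof
  interpret g: rmodule_hom R B C g
    using g by (rule quot_map_rmodule_hom)
  interpret h: rmodule_hom R B D h
    using g h D by (simp add: rmodule_homI quot_map_def modL_def)
  interpret q: rmodule_hom R D Q q
    using q D Q by (simp add: rmodule_homI)
  have surj_g: "g ` carrier B = carrier C"
    using g by (simp add: quot_map_def)
  show "g ` kern B D h \<subseteq> kern C Q q'"
    by (auto simp: kern_def q'g)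
  show "kern C Q q' \<subseteq> g ` kern B D h"
  proof
    fix c assume c: "c \<in> kern C Q q'"
    then obtain b where b: "b \<in> carrier B" "c = g b"
      using surj_g by (auto simp: kern_def)
    then have "h b \<in> kern D Q q"
      using c by (auto simp: kern_def q'g)
    then obtain a where a: "a \<in> kern B C g" "h b = h a"
      using ker_q by auto
    have a_B: "a \<in> carrier B" and "g a = \<zero>\<^bsub>C\<^esub>"
      using a(1) by (simp_all add: kern_def)
    then have "b \<ominus>\<^bsub>B\<^esub> a \<in> kern B D h" and "g (b \<ominus>\<^bsub>B\<^esub> a) = c"
      using a b h.hom_eq_iff[OF b(1) a_B] by (simp_all add: g.hom_diff g.N.M.diff_zero)
    then show "c \<in> g ` kern B D h"
      by blast
  qed
qed

lemma strict_subobj_image: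
  assumes g: "quot_map R B C g" and GA: "G (subm B (kern B C g))" and N: "strict_subobj R G B N"
  shows "strict_subobj R G C (g ` N)"
proof -
  interpret rmodule_hom R B C g
    using g by (rule quot_map_rmodule_hom)
  have B: "modL R B" and C: "modL R C" and surj_g: "g ` carrier B = carrier C"
    using g by (simp_all add: quot_map_def)
  have N_B: "rsubmod R B N" and GN: "G (subm B N)"
    using N by (simp_all add: strict_subobj_def subobj_def)
  show ?thesis
  proof (rule strict_subobjI)
    show "rsubmod R C (g ` N)"
      by (rule rsubmod_image[OF N_B])
    show "G (subm C (g ` N))"
      by (rule G_image[OF B C is_rhom N_B GN])
  next
    fix C' assume C': "rsubmod R C C'" "G (subm C C')"
    define B' where "B' = {b \<in> carrier B. g b \<in> C'}"
    have B': "rsubmod R B B'"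
      unfolding B'_def by (rule rsubmod_vimage[OF C'(1)])
    have "B' \<inter> kern B C g = kern B C g" and "g ` B' = C'"
      using C'(1) surj_g N.rsubmod_subset[OF C'(1)] by (auto simp: B'_def kern_def rsubmod_def)
    then have "G (subm B B')"
      using G_subm_by_kern_image[OF B C is_rhom B'] GA C'(2) by simp
    then have "G (subm C (g ` (N \<inter> B')))"
      using G_image[OF B C is_rhom M.rsubmod_Int[OF N_B B']] strict_subobjD[OF N B'] by simp
    moreover have "g ` (N \<inter> B') = g ` N \<inter> C'"
      using M.rsubmod_subset[OF N_B] by (auto simp: B'_def)
    ultimately show "G (subm C (g ` N \<inter> C'))"
      by simp
  qed
qed

lemma strict_quot_induced:
  assumes g: "quot_map R B C g" and GA: "G (subm B (kern B C g))" and GC: "G C"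
    and h: "strict_quot R G B D h" and q: "quot_map R D Q q" and ker_q: "kern D Q q = h ` kern B C g"
  shows "\<exists>q'. strict_quot R G C Q q'"
proof -
  note h' = strict_quotD[OF h]
  have h_hom: "rhom R B D h" and D: "right_module R D" and surj_h: "h ` carrier B = carrier D"
    using h'(2) by (simp_all add: quot_map_def modL_def)
  have q_hom: "rhom R D Q q" and Q: "right_module R Q"
    using q by (simp_all add: quot_map_def modL_def)
  have "kern B C g \<subseteq> kern B Q (q \<circ> h)"
  proof
    fix a assume a: "a \<in> kern B C g"
    then have "h a \<in> kern D Q q"
      using ker_q by blast
    with a show "a \<in> kern B Q (q \<circ> h)"
      by (simp add: kern_def)
  qed
  then obtain q' where q': "rhom R C Q q'" and q'g: "\<And>b. b \<in> carrier B \<Longrightarrow> q' (g b) = q (h b)"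
    using quot_map_factor[OF g rhom_comp[OF h_hom q_hom] Q] by auto
  have "q' ` carrier C = (\<lambda>b. q (h b)) ` carrier B"
    using g unfolding quot_map_def
    by (metis (no_types, lifting) image_cong image_image q'g)
  also have "\<dots> = q ` h ` carrier B"
    by (simp add: image_image)
  finally have "quot_map R C Q q'"
    using G_modL[OF GC] q q' surj_h by (simp add: quot_map_def)
  moreover have "strict_subobj R G C (kern C Q q')"
    using strict_subobj_image[OF g GA h'(3)] kern_factor[OF g h_hom D q_hom Q q'g ker_q] by simp
  ultimately have "strict_quot R G C Q q'"
    using GC by (simp add: strict_quot_def)
  then show ?thesis
    by blast
qed

definition all_strict_quots :: "('a, 'b) modclass \<Rightarrow> ('a, 'b) modclass" where
  "all_strict_quots \<Phi> B \<longleftrightarrow> G B \<and> (\<forall>C g. strict_quot R G B C g \<longrightarrow> \<Phi> C)"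

lemma all_strict_quotsD:
  "all_strict_quots \<Phi> B \<Longrightarrow> G B"
  "all_strict_quots \<Phi> B \<Longrightarrow> strict_quot R G B C g \<Longrightarrow> \<Phi> C"
  by (auto simp: all_strict_quots_def)

lemma all_strict_quots_strict_quot:
  assumes B: "all_strict_quots \<Phi> B" and g: "strict_quot R G B C g"
  shows "all_strict_quots \<Phi> C"
  using B strict_quot_comp[OF g] G_quot_map[OF strict_quotD(2,1)[OF g]]
  by (auto simp: all_strict_quots_def)

lemma all_strict_quots_inj:
  "all_strict_quots \<Phi> B \<Longrightarrow> quot_map R B C g \<Longrightarrow> inj_on g (carrier B) \<Longrightarrow> all_strict_quots \<Phi> C"
  by (rule all_strict_quots_strict_quot) (auto intro: strict_quot_of_inj simp: all_strict_quots_def)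

lemma all_strict_quots_ext_kern:
  assumes \<Phi>: "ext_closed R \<Phi>" and g: "quot_map R B C g"
    and A: "all_strict_quots \<Phi> (subm B (kern B C g))" and C: "all_strict_quots \<Phi> C"
  shows "all_strict_quots \<Phi> B"
proof -
  interpret rmodule_hom R B C g
    using g by (rule quot_map_rmodule_hom)
  have GA: "G (subm B (kern B C g))" and GC: "G C"
    using A C by (simp_all add: all_strict_quotsD)
  have "G B"
    using G_ext[OF ses_kern[OF g G_modL[OF GA]] GA GC] .
  moreover have "\<Phi> D" if h: "strict_quot R G B D h" for D h
  proof -
    have D: "modL R D"
      using strict_quotD(2)[OF h] by (simp add: quot_map_def)
    define D\<^sub>1 where "D\<^sub>1 = h ` kern B C g"
    have sq: "strict_quot R G (subm B (kern B C g)) (subm D D\<^sub>1) h"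
      unfolding D\<^sub>1_def using h rsubmod_kern GA by (rule strict_quot_restrict)
    then have \<Phi>1: "\<Phi> (subm D D\<^sub>1)"
      by (rule all_strict_quotsD(2)[OF A])
    have D1_D: "rsubmod R D D\<^sub>1"
      unfolding D\<^sub>1_def using rmodule_hom.rsubmod_image[OF quot_map_rmodule_hom[OF strict_quotD(2)[OF h]] rsubmod_kern] .
    obtain Q q where q: "quot_map R D Q q" "kern D Q q = D\<^sub>1"
      using exists_quot_map_kern[OF D D1_D] by blast
    obtain q' where "strict_quot R G C Q q'"
      using strict_quot_induced[OF g GA GC h q(1)] q(2) by (auto simp: D\<^sub>1_def)
    then have \<Phi>2: "\<Phi> Q"
      by (rule all_strict_quotsD(2)[OF C])
    have "modL R (subm D D\<^sub>1)"
      using strict_quotD(2)[OF sq] by (simp add: quot_map_def)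
    then have "ses R (subm D D\<^sub>1) D Q id q"
      using ses_kern[OF q(1)] by (simp add: q(2))
    then show "\<Phi> D"
      using \<Phi> \<Phi>1 \<Phi>2 by (rule ext_closedD)
  qed
  ultimately show ?thesis
    by (simp add: all_strict_quots_def)
qed

lemma ext_closed_all_strict_quots:
  assumes \<Phi>: "ext_closed R \<Phi>"
  shows "ext_closed R (all_strict_quots \<Phi>)"
  unfolding ext_closed_def
proof (intro allI impI, elim conjE)
  fix A B C f g assume ses: "ses R A B C f g"
    and A: "all_strict_quots \<Phi> A" and C: "all_strict_quots \<Phi> C"
  have g: "quot_map R B C g" and f: "rhom R A B f" "inj_on f (carrier A)"
    and ker: "f ` carrier A = kern B C g" and A_mod: "modL R A" and B: "modL R B"
    using ses by (simp_all add: ses_def quot_map_def)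
  interpret f: rmodule_hom R A "subm B (kern B C g)" f
    using A_mod B f(1) ker rmodule_hom.rsubmod_kern[OF quot_map_rmodule_hom[OF g]]
    by (intro rmodule_homI rmodule.right_module_subm rhom_corestrict) (simp_all add: modL_def rmodule_def)
  have "quot_map R A (subm B (kern B C g)) f"
    using A_mod f.fin_gen_image ker f.N.is_right_module f.is_rhom by (simp add: quot_map_def modL_def)
  then have "all_strict_quots \<Phi> (subm B (kern B C g))"
    using all_strict_quots_inj[OF A] f(2) by simp
  then show "all_strict_quots \<Phi> B"
    using all_strict_quots_ext_kern[OF \<Phi> g _ C] by simp
qed

lemma dsum_closed_all_strict_quots:
  assumes \<Phi>: "ext_closed R \<Phi>"
  shows "dsum_closed R (all_strict_quots \<Phi>)"
  unfolding dsum_closed_def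
proof (intro allI impI, elim conjE)
  fix B A C assume B: "modL R B" and A_B: "rsubmod R B A" and C_B: "rsubmod R B C"
    and AC: "A \<inter> C = {\<zero>\<^bsub>B\<^esub>}" and sum: "\<forall>x\<in>carrier B. \<exists>a\<in>A. \<exists>c\<in>C. x = a \<oplus>\<^bsub>B\<^esub> c"
    and A: "all_strict_quots \<Phi> (subm B A)" and C: "all_strict_quots \<Phi> (subm B C)"
  obtain Q q where q: "quot_map R B Q q" "kern B Q q = A"
    using exists_quot_map_kern[OF B A_B] by blast
  interpret rmodule_hom R B Q q
    using q(1) by (rule quot_map_rmodule_hom)
  have C_sub: "C \<subseteq> carrier B"
    using C_B by (rule M.rsubmod_subset)
  have "bij_betw q C (carrier Q)"
    using q AC sum by (intro bij_betw_complement_kern C_B) (simp_all add: quot_map_def)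
  then have surj: "q ` C = carrier Q" and inj: "inj_on q C"
    by (simp_all add: bij_betw_def)
  have "quot_map R (subm B C) Q q"
    using G_modL[OF all_strict_quotsD(1)[OF C]] q(1) surj rhom_comp[OF rhom_inclusion[OF C_sub] is_rhom]
    by (simp add: quot_map_def)
  then have "all_strict_quots \<Phi> Q"
    using all_strict_quots_inj[OF C] inj by simp
  then show "all_strict_quots \<Phi> B"
    using all_strict_quots_ext_kern[OF \<Phi> q(1)] A by (simp add: q(2))
qed

lemma pseudo_torsion_class_all_strict_quots:
  assumes R: "ring R" and \<Phi>: "ext_closed R \<Phi>" and \<Phi>_zero: "\<And>Z. modL R Z \<Longrightarrow> is_zero_mod Z \<Longrightarrow> \<Phi> Z"
  shows "pseudo_torsion_class R G (all_strict_quots \<Phi>)"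
proof -
  obtain Z :: "('a, 'b) module" where Z: "modL R Z" "is_zero_mod Z"
    using exists_zero_module[OF R] by blast
  have "\<Phi> C" if "strict_quot R G Z C g" for C g
    using strict_quotD(2)[OF that] rmodule_hom.zero_mod_image[OF quot_map_rmodule_hom] Z(2)
    by (intro \<Phi>_zero) (auto simp: quot_map_def)
  then have "all_strict_quots \<Phi> Z"
    using G_zero[OF Z] by (simp add: all_strict_quots_def)
  then show ?thesis
    using all_strict_quots_strict_quot ext_closed_all_strict_quots[OF \<Phi>]
    unfolding pseudo_torsion_class_def
    by (auto simp: all_strict_quotsD(1) strict_ses_def intro: ext_closedD)
qed

lemma Pth_eq_all_strict_quots: "Pth R G \<theta> = all_strict_quots (\<lambda>C. is_zero_mod C \<or> 0 < \<theta> C)"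
proof
  fix M
  have "is_zero_mod C" if "is_zero_mod M" "strict_quot R G M C g" for C g
    using that strict_quotD(2)[OF that(2)] rmodule_hom.zero_mod_image[OF quot_map_rmodule_hom]
    by (auto simp: quot_map_def)
  then show "Pth R G \<theta> M = all_strict_quots (\<lambda>C. is_zero_mod C \<or> 0 < \<theta> C) M"
    by (auto simp: Pth_def all_strict_quots_def)
qed

lemma Pbar_eq_all_strict_quots: "Pbar R G \<theta> = all_strict_quots (\<lambda>C. 0 \<le> \<theta> C)"
  by (auto simp: Pbar_def all_strict_quots_def)

end

theorem mainTheorem11:
  fixes K :: "'k ring" and R :: "'a ring" and phi :: "'k \<Rightarrow> 'a"
    and G :: "('a, 'b) module \<Rightarrow> bool" and \<theta> :: "('a, 'b) module \<Rightarrow> real"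
  assumes "fd_algebra K R phi"
    and "torsion_class R G"
    and "additive_fun R \<theta>"
  shows "pseudo_torsion_class R G (Pth R G \<theta>) \<and> pseudo_torsion_class R G (Pbar R G \<theta>) \<and>
         ext_closed R (Pth R G \<theta>) \<and> ext_closed R (Pbar R G \<theta>) \<and>
         dsum_closed R (Pth R G \<theta>) \<and> dsum_closed R (Pbar R G \<theta>)"
proof -
  interpret torsion_class_of R G
    using assms(2) by (rule torsion_class_of.intro)
  have R: "ring R"
    using assms(1) by (simp add: fd_algebra_def)
  have pos: "ext_closed R (\<lambda>C. is_zero_mod C \<or> 0 < \<theta> C)"
    using assms(3) by (rule ext_closed_zero_or_pos)
  have nonneg: "ext_closed R (\<lambda>C. 0 \<le> \<theta> C)"
    using assms(3) by (rule ext_closed_nonneg)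
  show ?thesis
    unfolding Pth_eq_all_strict_quots Pbar_eq_all_strict_quots
    using pseudo_torsion_class_all_strict_quots[OF R pos] pseudo_torsion_class_all_strict_quots[OF R nonneg]
      ext_closed_all_strict_quots[OF pos] ext_closed_all_strict_quots[OF nonneg]
      dsum_closed_all_strict_quots[OF pos] dsum_closed_all_strict_quots[OF nonneg]
      additive_fun_zero_mod[OF assms(3)]
    by simp
qed

end
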